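(* Let $X$ be a set, let $c:X\times X\to(-\infty,\infty]$ be a symmetric cost function ($c(x,y)=c(y,x)$), let $Y\subseteq X$, and let $\tilde{c}:Y\times Y\to(-\infty,\infty]$ be the restriction of $c$, i.e. $\tilde{c}(x,y)=c(x,y)$ for all $x,y\in Y$. Let $\mathcal{C}_X$ denote the $c$-class (the image of the transform $K\mapsto K^c$ on subsets of $X$) and $\mathcal{C}_Y$ the $\tilde{c}$-class (the image of the transform $K\mapsto K^{\tilde{c}}$ on subsets of $Y$). Assume that $Y\in \mathcal{C}_X$. Then \[ \mathcal{C}_Y=\{ B\cap Y: \, Y^c \subseteq B \in \mathcal{C}_X\}.\]
   Context: For a symmetric cost $c:X\times X\to(-\infty,\infty]$ and $K\subseteq X$, the $c$-dual set is $K^c=\{y\in X:\ c(x,y)\ge 0 \ \forall x\in K\}$; analogously, for $A\subseteq Y$, $A^{\tilde{c}}=\{y\in Y:\ \tilde{c}(x,y)\ge 0\ \forall x\in A\}$. The map $K\mapsto K^c$ is an order reversing quasi involution, and its image $\mathcal{C}_X=\{K^c: K\subseteq X\}$ consists exactly of the sets $K\subseteq X$ with $K^{cc}=K$ (similarly $\mathcal{C}_Y$ consists of the $A\subseteq Y$ with $A^{\tilde{c}\tilde{c}}=A$). Here $Y^c$ denotes the $c$-dual of $Y$ taken in $X$. *)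

theory Defs
  imports "HOL-Analysis.Analysis"
begin

definition cdual :: "'a set \<Rightarrow> ('a \<Rightarrow> 'a \<Rightarrow> ereal) \<Rightarrow> 'a set \<Rightarrow> 'a set" where
  "cdual X c K = {y \<in> X. \<forall>x\<in>K. c x y \<ge> 0}"

definition cclass :: "'a set \<Rightarrow> ('a \<Rightarrow> 'a \<Rightarrow> ereal) \<Rightarrow> 'a set set" where
  "cclass X c = {cdual X c K | K. K \<subseteq> X}"

end

theory Submission
  imports Defs
begin

text \<open>Dualising a subset of \<open>Y\<close> with respect to \<open>ct\<close> is dualising it in \<open>X\<close> and
  intersecting with \<open>Y\<close>. Conversely, if \<open>Y\<^sup>c \<subseteq> B = B\<^sup>c\<^sup>c\<close>, then \<open>B\<^sup>c \<subseteq> Y\<^sup>c\<^sup>c = Y\<close>,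
  so \<open>B \<inter> Y\<close> is the \<open>ct\<close>-dual of the subset \<open>B\<^sup>c\<close> of \<open>Y\<close>.\<close>

lemma cdual_antimono: "A \<subseteq> B \<Longrightarrow> cdual X c B \<subseteq> cdual X c A"
  unfolding cdual_def by auto

lemma cdual_subset: "cdual X c K \<subseteq> X"
  unfolding cdual_def by auto

lemma cdual_in_cclass: "K \<subseteq> X \<Longrightarrow> cdual X c K \<in> cclass X c"
  unfolding cclass_def by auto

lemma subset_cdual_cdual:
  assumes "\<forall>x\<in>X. \<forall>y\<in>X. c x y = c y x" and "K \<subseteq> X"
  shows "K \<subseteq> cdual X c (cdual X c K)"
  using assms unfolding cdual_def by auto

lemma cclass_cdual_cdual:
  assumes sym: "\<forall>x\<in>X. \<forall>y\<in>X. c x y = c y x" and "B \<in> cclass X c"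
  shows "cdual X c (cdual X c B) = B"
proof -
  obtain K where K: "K \<subseteq> X" "B = cdual X c K"
    using \<open>B \<in> cclass X c\<close> unfolding cclass_def by auto
  have "cdual X c (cdual X c B) \<subseteq> B"
    using K by (simp add: cdual_antimono subset_cdual_cdual[OF sym])
  moreover have "B \<subseteq> cdual X c (cdual X c B)"
    using K by (simp add: cdual_subset subset_cdual_cdual[OF sym])
  ultimately show ?thesis by (rule subset_antisym)
qed

lemma cdual_restrict:
  assumes "A \<subseteq> Y" "Y \<subseteq> X" "\<forall>x\<in>Y. \<forall>y\<in>Y. ct x y = c x y"
  shows "cdual Y ct A = cdual X c A \<inter> Y"
  using assms unfolding cdual_def by (auto simp: subset_iff)

theorem lemma8p15:
  fixes X Y :: "'a set" and c ct :: "'a \<Rightarrow> 'a \<Rightarrow> ereal"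
  assumes c_range: "\<forall>x\<in>X. \<forall>y\<in>X. c x y \<noteq> -\<infinity>"
    and c_sym: "\<forall>x\<in>X. \<forall>y\<in>X. c x y = c y x"
    and YX: "Y \<subseteq> X"
    and ct_restr: "\<forall>x\<in>Y. \<forall>y\<in>Y. ct x y = c x y"
    and Y_class: "Y \<in> cclass X c"
  shows "cclass Y ct = {B \<inter> Y | B. cdual X c Y \<subseteq> B \<and> B \<in> cclass X c}"
proof (intro set_eqI iffI)
  fix S assume "S \<in> cclass Y ct"
  then obtain A where A: "A \<subseteq> Y" "S = cdual Y ct A"
    unfolding cclass_def by auto
  have "S = cdual X c A \<inter> Y"
    using A cdual_restrict[OF _ YX ct_restr] by simp
  moreover have "cdual X c Y \<subseteq> cdual X c A"
    using A(1) by (rule cdual_antimono)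
  moreover have "cdual X c A \<in> cclass X c"
    using A(1) YX by (simp add: cdual_in_cclass)
  ultimately show "S \<in> {B \<inter> Y | B. cdual X c Y \<subseteq> B \<and> B \<in> cclass X c}" by blast
next
  fix S assume "S \<in> {B \<inter> Y | B. cdual X c Y \<subseteq> B \<and> B \<in> cclass X c}"
  then obtain B where B: "S = B \<inter> Y" "cdual X c Y \<subseteq> B" "B \<in> cclass X c" by blast
  have dual_B_in_Y: "cdual X c B \<subseteq> Y"
    using cdual_antimono[OF B(2), of X c] cclass_cdual_cdual[OF c_sym Y_class] by simp
  have "cdual Y ct (cdual X c B) = S"
    using cdual_restrict[OF dual_B_in_Y YX ct_restr] cclass_cdual_cdual[OF c_sym B(3)] B(1)
    by simp
  then show "S \<in> cclass Y ct"
    using dual_B_in_Y unfolding cclass_def by blast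
qed

end
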